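(* Let $\mathcal{S}$ be a state space, $\mathcal{A}$ a finite action space, $\rho$ a distribution on $\mathcal{S}$, $\pi_{\mathrm{ref}}$ a full-support policy, $\beta>0$, and $r^*:\mathcal{S}\times\mathcal{A}\to\mathbb{R}$ a bounded reward. Let $\mathbb{P}_{r^*}(y=1|s,a,a')\in[0,1]$ be a preference model satisfying $\mathbb{P}_{r^*}(y=1|s,a,a')\ge\frac12$ for all $s$ and all $a,a'\in\mathcal{A}$ with $r^*(s,a)\ge r^*(s,a')$. Then for any policy $\pi$, $$\mathrm{Cov}^{\pi^*_{r^*}|\pi}\ge\max_{\gamma>0,\bar\pi}\Big(\sqrt{\big(\gamma+2\mathbb{P}_{r^*}(\bar\pi\succ\pi)\big)\log\frac{1+\gamma}{\gamma}}+\sqrt{\frac{J_\beta(\pi^*_{r^*})-J_\beta(\bar\pi)}{2\beta}}\Big)^{-1},$$ $$\mathrm{Cov}^{\pi^*_{r^*}|\pi}\ge\max_{\gamma>0,\bar\pi}\Big(\sqrt{\big(\gamma+2\mathbb{P}_{r^*}(\pi\succ\bar\pi)\big)\log\frac{1+\gamma}{\gamma}}+\sqrt{\frac{J_\beta(\pi^*_{r^*})-J_\beta(\bar\pi)}{2\beta}}\Big)^{-1},$$ where the maxima are over $\gamma>0$ and arbitrary intermediate policies $\bar\pi$.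
   Context: $\pi^*_{r^*}(a|s)\propto\pi_{\mathrm{ref}}(a|s)e^{r^*(s,a)/\beta}$; $J_\beta(\pi):=\mathbb{E}_{s\sim\rho}[\mathbb{E}_{a\sim\pi(\cdot|s)}r^*(s,a)-\beta\mathrm{KL}(\pi(\cdot|s)\|\pi_{\mathrm{ref}}(\cdot|s))]$; $\mathrm{Cov}^{\tilde\pi|\pi}:=\mathbb{E}_{s\sim\rho,a\sim\tilde\pi(\cdot|s)}[\tilde\pi(a|s)/\pi(a|s)]$; $\mathbb{P}_{r^*}(\pi\succ\tilde\pi):=\mathbb{E}_{s\sim\rho,a\sim\pi(\cdot|s),a'\sim\tilde\pi(\cdot|s)}[\mathbb{P}_{r^*}(y=1|s,a,a')]$. *)

theory Defs
  imports "HOL-Probability.Probability"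
begin

text \<open>States: type 's with a probability measure M (the distribution rho).
Actions: a finite type 'a. A policy is a function pi s a = pi(a|s).\<close>

definition is_policy :: "('s \<Rightarrow> 'a::finite \<Rightarrow> real) \<Rightarrow> bool" where
  "is_policy p \<longleftrightarrow> (\<forall>s a. 0 \<le> p s a) \<and> (\<forall>s. (\<Sum>a\<in>UNIV. p s a) = 1)"

definition measurable_policy :: "'s measure \<Rightarrow> ('s \<Rightarrow> 'a::finite \<Rightarrow> real) \<Rightarrow> bool" where
  "measurable_policy M p \<longleftrightarrow> (\<forall>a. (\<lambda>s. p s a) \<in> borel_measurable M)"

definition pistar :: "('s \<Rightarrow> 'a::finite \<Rightarrow> real) \<Rightarrow> ('s \<Rightarrow> 'a \<Rightarrow> real) \<Rightarrow> real \<Rightarrow> 's \<Rightarrow> 'a \<Rightarrow> real" where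
  "pistar piref r \<beta> s a =
     piref s a * exp (r s a / \<beta>) / (\<Sum>b\<in>UNIV. piref s b * exp (r s b / \<beta>))"

text \<open>KL divergence KL(p(.|s) || q(.|s)) over the finite action set (0 log 0 = 0).\<close>
definition KL :: "('s \<Rightarrow> 'a::finite \<Rightarrow> real) \<Rightarrow> ('s \<Rightarrow> 'a \<Rightarrow> real) \<Rightarrow> 's \<Rightarrow> real" where
  "KL p q s = (\<Sum>a\<in>UNIV. p s a * ln (p s a / q s a))"

definition Jint :: "('s \<Rightarrow> 'a::finite \<Rightarrow> real) \<Rightarrow> ('s \<Rightarrow> 'a \<Rightarrow> real) \<Rightarrow> real \<Rightarrow> ('s \<Rightarrow> 'a \<Rightarrow> real) \<Rightarrow> 's \<Rightarrow> real" where
  "Jint r piref \<beta> p s = (\<Sum>a\<in>UNIV. p s a * r s a) - \<beta> * KL p piref s"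

definition J :: "'s measure \<Rightarrow> ('s \<Rightarrow> 'a::finite \<Rightarrow> real) \<Rightarrow> ('s \<Rightarrow> 'a \<Rightarrow> real) \<Rightarrow> real \<Rightarrow> ('s \<Rightarrow> 'a \<Rightarrow> real) \<Rightarrow> real" where
  "J M r piref \<beta> p = (\<integral>s. Jint r piref \<beta> p s \<partial>M)"

text \<open>Coverage Cov^{pt|p} = E_{s~rho, a~pt}[pt(a|s)/p(a|s)], valued in [0,\<infinity>]
  (equal to \<infinity> when p(a|s) = 0 < pt(a|s) on a set of positive measure).\<close>
definition Cov :: "'s measure \<Rightarrow> ('s \<Rightarrow> 'a::finite \<Rightarrow> real) \<Rightarrow> ('s \<Rightarrow> 'a \<Rightarrow> real) \<Rightarrow> ennreal" where
  "Cov M pt p = (\<integral>\<^sup>+ s. (\<Sum>a\<in>UNIV. ennreal (pt s a) * (ennreal (pt s a) / ennreal (p s a))) \<partial>M)"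

definition Pref :: "'s measure \<Rightarrow> ('s \<Rightarrow> 'a::finite \<Rightarrow> 'a \<Rightarrow> real) \<Rightarrow> ('s \<Rightarrow> 'a \<Rightarrow> real) \<Rightarrow> ('s \<Rightarrow> 'a \<Rightarrow> real) \<Rightarrow> real" where
  "Pref M P p p' = (\<integral>s. (\<Sum>a\<in>UNIV. \<Sum>a'\<in>UNIV. p s a * p' s a' * P s a a') \<partial>M)"

end

theory Submission
  imports Defs
begin

text \<open>Fix a state and write \<open>q\<close>, \<open>p\<close>, \<open>m\<close> for the action distributions of \<open>\<pi>\<^sup>*\<close>, \<open>\<pi>\<close> and
  the intermediate policy \<open>\<pi>'\<close>, and \<open>W a\<close> for the \<open>p\<close>-mass of the actions ranked (by the reward) no
  higher than \<open>a\<close>. For the hinge \<open>h = max 0 (1 - \<mu> W)\<close>, Cauchy--Schwarz bounds \<open>E\<^sub>q h\<close> by the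
  \<open>\<chi>\<^sup>2\<close>-divergence of \<open>q\<close> from \<open>p\<close> and the first two \<open>p\<close>-moments of \<open>h\<close>; since \<open>W\<close> is a
  discrete distribution function, these moments are at most the integrals of \<open>h\<close> and \<open>h\<^sup>2\<close>
  over \<open>[0,1]\<close>. From below, \<open>E\<^sub>q h \<ge> 1 - TV(q,m) - \<mu> E\<^sub>m W\<close>. Optimising \<open>\<mu>\<close>, with a Pade
  lower bound for \<open>ln (1 + 1/\<gamma>)\<close>, yields
  \<open>1 / (\<Sum>a. q\<^sup>2/p) \<le> TV(q,m) + sqrt ((\<gamma> + E\<^sub>m W) ln ((1+\<gamma>)/\<gamma>))\<close>.

  Over the states, Pinsker's inequality and the Gibbs variational identity
  \<open>J(\<pi>\<^sup>*) - J(\<pi>') = \<beta> E KL(\<pi>' \<parallel> \<pi>\<^sup>*)\<close> control the expected total variation, Jensen controls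
  the square root, the preference assumption gives \<open>E\<^sub>m W \<le> 2 P(\<pi>' \<succ> \<pi>)\<close>, and the tangent
  bound \<open>2 l - l\<^sup>2 / C \<le> C\<close> turns the bounds on \<open>1 / C\<close> into one on the coverage.\<close>

section \<open>Scalar inequalities\<close>

lemma ln_add_one_ge_pade:
  fixes z :: real assumes "0 \<le> z"
  shows "3*z*(2+z)/(z^2+6*z+6) \<le> ln (1+z)"
proof -
  let ?g = "\<lambda>z::real. ln (1+z) - 3*z*(2+z)/(z^2+6*z+6)"
  have "?g 0 \<le> ?g z"
  proof (rule deriv_nonneg_imp_mono[of 0 z ?g "\<lambda>z. 1/(1+z) - 12*(z^2+3*z+3)/(z^2+6*z+6)^2"])
    fix x assume "x \<in> {0..z}"
    then have x0: "0 \<le> x" by auto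
    have d: "x^2+6*x+6 > 0" using x0 by (smt (verit) zero_le_power2)
    show "(?g has_real_derivative 1/(1+x) - 12*(x^2+3*x+3)/(x^2+6*x+6)^2) (at x)"
      using x0 d by (auto intro!: derivative_eq_intros simp: field_simps power2_eq_square)
    have "12*(x^2+3*x+3)*(1+x) \<le> (x^2+6*x+6)^2"
      using x0 by (simp add: power2_eq_square algebra_simps)
    then show "0 \<le> 1/(1+x) - 12*(x^2+3*x+3)/(x^2+6*x+6)^2"
      using x0 d by (simp add: field_simps)
  qed (use assms in auto)
  then show ?thesis by simp
qed

lemma four_le_inverse_mult_one_minus:
  fixes x :: real assumes "0 < x" "x < 1"
  shows "4 \<le> 1/(x*(1-x))"
proof -
  have "0 \<le> (2*x - 1)^2" by simp
  then have "4 * (x*(1-x)) \<le> 1" by (simp add: power2_eq_square algebra_simps)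
  then show ?thesis using assms by (simp add: le_divide_eq)
qed

lemma twice_square_le_neg_ln_one_minus:
  fixes x :: real assumes "0 \<le> x" "x < 1"
  shows "2*x^2 \<le> - ln (1-x)"
proof -
  let ?h = "\<lambda>x::real. - ln (1-x) - 2*x^2"
  have "?h 0 \<le> ?h x"
  proof (rule deriv_nonneg_imp_mono[of 0 x ?h "\<lambda>x. 1/(1-x) - 4*x"])
    fix y assume y: "y \<in> {0..x}"
    then show "(?h has_real_derivative 1/(1-y) - 4*y) (at y)"
      using assms by (auto intro!: derivative_eq_intros simp: field_simps)
    show "0 \<le> 1/(1-y) - 4*y"
    proof (cases "y = 0")
      case False
      then have "4 \<le> 1/(y*(1-y))" using y assms by (intro four_le_inverse_mult_one_minus) auto
      then show ?thesis using y assms False by (simp add: field_simps)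
    qed simp
  qed (use assms in auto)
  then show ?thesis by simp
qed

lemma binary_pinsker:
  fixes \<alpha> b :: real
  assumes a0: "0 \<le> \<alpha>" and a1: "\<alpha> \<le> 1" and b0: "0 < b" and b1: "b < 1"
  shows "2*(\<alpha>-b)^2 \<le> \<alpha> * ln (\<alpha>/b) + (1-\<alpha>) * ln ((1-\<alpha>)/(1-b))"
proof -
  consider "\<alpha> = 0" | "\<alpha> = 1" | "0 < \<alpha>" "\<alpha> < 1" using a0 a1 by linarith
  then show ?thesis
  proof cases
    case 1
    then show ?thesis using twice_square_le_neg_ln_one_minus[of b] b0 b1 by (simp add: ln_div)
  next
    case 2
    then show ?thesis
      using twice_square_le_neg_ln_one_minus[of "1-b"] b0 b1 by (simp add: ln_div power2_commute)
  next
    case 3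
    define g where "g x = \<alpha>*(ln \<alpha> - ln x) + (1-\<alpha>)*(ln (1-\<alpha>) - ln (1-x)) - 2*(\<alpha>-x)^2" for x
    define g' where "g' x = (x-\<alpha>)*(1/(x*(1-x)) - 4)" for x
    have deriv: "(g has_real_derivative g' x) (at x)" if "0 < x" "x < 1" for x
      using that unfolding g_def g'_def
      by (auto intro!: derivative_eq_intros) (simp add: field_simps power2_eq_square)
    have "g \<alpha> \<le> g b"
    proof (cases "\<alpha> \<le> b")
      case True
      show ?thesis
      proof (rule deriv_nonneg_imp_mono[of \<alpha> b g g'])
        fix x assume "x \<in> {\<alpha>..b}"
        then show "(g has_real_derivative g' x) (at x)" and "0 \<le> g' x"
          using 3 b1 four_le_inverse_mult_one_minus[of x] deriv[of x] unfolding g'_def by auto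
      qed (use True in simp)
    next
      case False
      show ?thesis
      proof (rule deriv_nonpos_imp_antimono[of b \<alpha> g g'])
        fix x assume "x \<in> {b..\<alpha>}"
        then show "(g has_real_derivative g' x) (at x)" and "g' x \<le> 0"
          using 3 b0 four_le_inverse_mult_one_minus[of x] deriv[of x] unfolding g'_def
          by (auto intro!: mult_nonpos_nonneg)
      qed (use False in simp)
    qed
    moreover have "g \<alpha> = 0" unfolding g_def by simp
    moreover have "\<alpha> * ln (\<alpha>/b) + (1-\<alpha>) * ln ((1-\<alpha>)/(1-b)) = g b + 2*(\<alpha>-b)^2"
      using 3 b0 b1 unfolding g_def by (simp add: ln_div)
    ultimately show ?thesis by simp
  qed
qed

lemma log_sum_inequality:
  fixes m q :: "'a \<Rightarrow> real"
  assumes fin: "finite B" and m0: "\<And>a. a \<in> B \<Longrightarrow> 0 \<le> m a" and q0: "\<And>a. a \<in> B \<Longrightarrow> 0 < q a"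
  shows "sum m B * ln (sum m B / sum q B) \<le> (\<Sum>a\<in>B. m a * ln (m a / q a))"
proof (cases "sum m B = 0")
  case True
  then have "\<forall>a\<in>B. m a = 0" using sum_nonneg_eq_0_iff[OF fin] m0 by blast
  then show ?thesis using True by simp
next
  case False
  then have Mpos: "sum m B > 0" using sum_nonneg[of B m] m0 by (simp add: order_le_less)
  have "B \<noteq> {}" using False by auto
  then have Qpos: "sum q B > 0" using fin q0 by (simp add: sum_pos)
  define c where "c = sum m B / sum q B"
  have cpos: "c > 0" unfolding c_def using Mpos Qpos by simp
  have tangent: "m a * ln c + m a - q a * c \<le> m a * ln (m a / q a)" if a: "a \<in> B" for a
  proof (cases "m a = 0")
    case True then show ?thesis using q0[OF a] cpos by simp
  next
    case False
    then have ma: "m a > 0" using m0[OF a] by simp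
    have "ln (q a * c / m a) \<le> q a * c / m a - 1"
      using ma q0[OF a] cpos by (intro ln_le_minus_one) simp
    also have "ln (q a * c / m a) = ln c - ln (m a / q a)"
      using ma q0[OF a] cpos by (simp add: ln_div ln_mult)
    finally have "m a * (ln c - ln (m a / q a)) \<le> m a * (q a * c / m a - 1)"
      using ma by (intro mult_left_mono) auto
    then show ?thesis using ma by (simp add: algebra_simps)
  qed
  have "(\<Sum>a\<in>B. q a * c) = sum m B" unfolding c_def using Qpos
    by (simp add: sum_divide_distrib[symmetric] sum_distrib_right[symmetric])
  then have "(\<Sum>a\<in>B. m a * ln c + m a - q a * c) = sum m B * ln c"
    by (simp add: sum.distrib sum_subtractf sum_distrib_right[symmetric])
  moreover have "(\<Sum>a\<in>B. m a * ln c + m a - q a * c) \<le> (\<Sum>a\<in>B. m a * ln (m a / q a))"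
    using tangent by (intro sum_mono) auto
  ultimately show ?thesis unfolding c_def by simp
qed

lemma sum_UNIV_eq_sum_add_sum_Compl:
  fixes f :: "'a::finite \<Rightarrow> 'b::comm_monoid_add" shows "sum f UNIV = sum f A + sum f (-A)"
  by (metis Compl_eq_Diff_UNIV add.commute finite_class.finite_UNIV subset_UNIV sum.subset_diff)

lemma pinsker_inequality:
  fixes m q :: "'a::finite \<Rightarrow> real"
  assumes m0: "\<And>a. 0 \<le> m a" and m1: "sum m UNIV = 1"
    and q0: "\<And>a. 0 < q a" and q1: "sum q UNIV = 1"
  shows "2 * (\<Sum>a\<in>UNIV. max 0 (q a - m a))^2 \<le> (\<Sum>a\<in>UNIV. m a * ln (m a / q a))"
proof -
  define A where "A = {a. q a < m a}"
  define \<alpha> where "\<alpha> = sum m A"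
  define b where "b = sum q A"
  have "(\<Sum>a\<in>UNIV. max 0 (q a - m a)) - (\<Sum>a\<in>UNIV. max 0 (m a - q a)) = (\<Sum>a\<in>UNIV. q a - m a)"
    by (simp add: sum_subtractf[symmetric]) (intro sum.cong; auto simp: max_def)
  also have "\<dots> = 0" using m1 q1 by (simp add: sum_subtractf)
  also have "(\<Sum>a\<in>UNIV. max 0 (m a - q a)) = (\<Sum>a\<in>A. m a - q a)"
    by (rule sum.mono_neutral_cong_right) (auto simp: A_def max_def)
  finally have tv: "(\<Sum>a\<in>UNIV. max 0 (q a - m a)) = \<alpha> - b"
    unfolding \<alpha>_def b_def by (simp add: sum_subtractf)
  have mA: "sum m (-A) = 1 - \<alpha>" unfolding \<alpha>_def using m1 sum_UNIV_eq_sum_add_sum_Compl[of m A] by auto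
  have qA: "sum q (-A) = 1 - b" unfolding b_def using q1 sum_UNIV_eq_sum_add_sum_Compl[of q A] by auto
  have "\<alpha> * ln (\<alpha> / b) \<le> (\<Sum>a\<in>A. m a * ln (m a / q a))"
    unfolding \<alpha>_def b_def using m0 q0 by (intro log_sum_inequality) auto
  moreover have "(1-\<alpha>) * ln ((1-\<alpha>) / (1-b)) \<le> (\<Sum>a\<in>-A. m a * ln (m a / q a))"
    unfolding mA[symmetric] qA[symmetric] using m0 q0 by (intro log_sum_inequality) auto
  ultimately have "\<alpha> * ln (\<alpha> / b) + (1-\<alpha>) * ln ((1-\<alpha>) / (1-b))
      \<le> (\<Sum>a\<in>A. m a * ln (m a / q a)) + (\<Sum>a\<in>-A. m a * ln (m a / q a))" by simp
  also have "\<dots> = (\<Sum>a\<in>UNIV. m a * ln (m a / q a))"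
    by (rule sum_UNIV_eq_sum_add_sum_Compl[symmetric])
  finally have log_sum: "\<alpha> * ln (\<alpha> / b) + (1-\<alpha>) * ln ((1-\<alpha>) / (1-b)) \<le> (\<Sum>a\<in>UNIV. m a * ln (m a / q a))" .
  show ?thesis
  proof (cases "A = {}")
    case True
    then show ?thesis using tv log_sum unfolding \<alpha>_def b_def by simp
  next
    case False
    then have "b > 0" unfolding b_def using q0 by (simp add: sum_pos)
    moreover have "-A \<noteq> {}"
    proof
      assume "-A = {}"
      then have "sum q UNIV < sum m UNIV" unfolding A_def by (intro sum_strict_mono) auto
      then show False using m1 q1 by simp
    qed
    then have "sum q (-A) > 0" using q0 by (simp add: sum_pos)
    then have "b < 1" using qA by simp
    moreover have "0 \<le> \<alpha>" "0 \<le> sum m (-A)" unfolding \<alpha>_def using m0 by (simp_all add: sum_nonneg)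
    ultimately have "2*(\<alpha>-b)^2 \<le> \<alpha> * ln (\<alpha>/b) + (1-\<alpha>) * ln ((1-\<alpha>)/(1-b))"
      using mA by (intro binary_pinsker) auto
    then show ?thesis using tv log_sum by simp
  qed
qed

section \<open>Moments of the hinge function\<close>

lemma cdf_weighted_sum_le_primitive:
  fixes p k :: "'a \<Rightarrow> real" and f F :: "real \<Rightarrow> real"
  assumes "finite A" and "\<And>a. a \<in> A \<Longrightarrow> 0 \<le> p a" and "sum p A \<le> 1"
    and step: "\<And>x y. 0 \<le> x \<Longrightarrow> x \<le> y \<Longrightarrow> y \<le> 1 \<Longrightarrow> f y * (y - x) \<le> F y - F x"
  shows "(\<Sum>a\<in>A. p a * f (\<Sum>a'\<in>{a'\<in>A. k a' \<le> k a}. p a')) \<le> F (sum p A) - F 0"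
  using assms(1-3)
proof (induction "card A" arbitrary: A rule: less_induct)
  case less
  note finA = less.prems(1) and p0 = less.prems(2) and p1 = less.prems(3)
  show ?case
  proof (cases "A = {}")
    case False
    \<comment> \<open>Remove the actions of top rank; each of them sees the whole mass of \<open>A\<close>.\<close>
    have "Max (k ` A) \<in> k ` A" using False finA by (intro Max_in) auto
    then obtain a0 where a0: "a0 \<in> A" "k a0 = Max (k ` A)" by auto
    have top: "\<forall>a\<in>A. k a \<le> k a0" using a0 finA by auto
    define T where "T = {a\<in>A. k a = k a0}"
    define A' where "A' = {a\<in>A. k a < k a0}"
    have AU: "A = A' \<union> T" and disj: "A' \<inter> T = {}" unfolding T_def A'_def using top by force+
    have finA': "finite A'" and finT: "finite T" using finA unfolding A'_def T_def by auto
    have "A' \<subset> A" using a0(1) unfolding A'_def by auto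
    then have cardA': "card A' < card A" using finA by (intro psubset_card_mono)
    have sumA: "sum p A = sum p A' + sum p T"
      using AU disj finA' finT by (simp add: sum.union_disjoint)
    have pT0: "0 \<le> sum p T" using p0 unfolding T_def by (intro sum_nonneg) auto
    have IH: "(\<Sum>a\<in>A'. p a * f (\<Sum>a'\<in>{a'\<in>A'. k a' \<le> k a}. p a')) \<le> F (sum p A') - F 0"
    proof (rule less.hyps[OF cardA' finA'])
      show "\<And>a. a \<in> A' \<Longrightarrow> 0 \<le> p a" using p0 unfolding A'_def by auto
      show "sum p A' \<le> 1" using sumA pT0 p1 by simp
    qed
    have "(\<Sum>a\<in>A'. p a * f (\<Sum>a'\<in>{a'\<in>A. k a' \<le> k a}. p a'))
        = (\<Sum>a\<in>A'. p a * f (\<Sum>a'\<in>{a'\<in>A'. k a' \<le> k a}. p a'))"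
      unfolding A'_def by (intro sum.cong refl arg_cong[where f="\<lambda>X. p _ * f (sum p X)"]) auto
    moreover have "(\<Sum>a\<in>T. p a * f (\<Sum>a'\<in>{a'\<in>A. k a' \<le> k a}. p a')) = sum p T * f (sum p A)"
    proof -
      have "{a'\<in>A. k a' \<le> k a} = A" if "a \<in> T" for a using that top unfolding T_def by auto
      then show ?thesis by (simp add: sum_distrib_right)
    qed
    moreover have "f (sum p A) * (sum p A - sum p A') \<le> F (sum p A) - F (sum p A')"
      using step[of "sum p A'" "sum p A"] sum_nonneg[of A' p] p0 p1 sumA pT0 unfolding A'_def by simp
    moreover have "(\<Sum>a\<in>A. p a * f (\<Sum>a'\<in>{a'\<in>A. k a' \<le> k a}. p a'))
        = (\<Sum>a\<in>A'. p a * f (\<Sum>a'\<in>{a'\<in>A. k a' \<le> k a}. p a'))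
          + (\<Sum>a\<in>T. p a * f (\<Sum>a'\<in>{a'\<in>A. k a' \<le> k a}. p a'))"
      using AU disj finA' finT by (simp add: sum.union_disjoint)
    ultimately show ?thesis using IH sumA by (simp add: algebra_simps)
  qed simp
qed

definition hinge :: "real \<Rightarrow> real \<Rightarrow> real" where
  "hinge \<mu> x = max 0 (1 - \<mu>*x)"

text \<open>\<open>hinge_integral \<mu> x\<close> and \<open>hinge_sq_integral \<mu> x\<close> are the integrals of \<open>hinge \<mu>\<close> and
  \<open>(hinge \<mu>)\<^sup>2\<close> over \<open>[0, x]\<close>.\<close>

definition hinge_integral :: "real \<Rightarrow> real \<Rightarrow> real" where
  "hinge_integral \<mu> x = (if \<mu>*x \<le> 1 then x - \<mu>*x^2/2 else 1/(2*\<mu>))"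

definition hinge_sq_integral :: "real \<Rightarrow> real \<Rightarrow> real" where
  "hinge_sq_integral \<mu> x = (if \<mu>*x \<le> 1 then (1 - (1-\<mu>*x)^3)/(3*\<mu>) else 1/(3*\<mu>))"

lemma hinge_mult_le_hinge_integral_diff:
  assumes mu: "0 < \<mu>" and "0 \<le> x" "x \<le> y"
  shows "hinge \<mu> y * (y - x) \<le> hinge_integral \<mu> y - hinge_integral \<mu> x"
proof (cases "\<mu>*y \<le> 1")
  case True
  then have x1: "\<mu>*x \<le> 1" using assms by (smt (verit) mult_left_mono)
  have "(y-x)*(1-\<mu>*y) \<le> (y-x)*(1 - \<mu>*(x+y)/2)"
    using assms by (intro mult_left_mono) (auto simp: algebra_simps)
  also have "\<dots> = (y - \<mu>*y^2/2) - (x - \<mu>*x^2/2)" by (simp add: field_simps power2_eq_square)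
  finally show ?thesis using True x1 unfolding hinge_def hinge_integral_def by (simp add: mult.commute)
next
  case False
  then have hy: "hinge \<mu> y = 0" unfolding hinge_def by simp
  show ?thesis
  proof (cases "\<mu>*x \<le> 1")
    case True
    have "1/(2*\<mu>) - (x - \<mu>*x^2/2) = (1-\<mu>*x)^2/(2*\<mu>)" using mu by (simp add: field_simps power2_eq_square)
    also have "\<dots> \<ge> 0" using mu by simp
    finally show ?thesis using False True hy unfolding hinge_integral_def by simp
  qed (use False hy in \<open>simp add: hinge_integral_def\<close>)
qed

lemma hinge_sq_mult_le_hinge_sq_integral_diff:
  assumes mu: "0 < \<mu>" and "0 \<le> x" "x \<le> y"
  shows "(hinge \<mu> y)^2 * (y - x) \<le> hinge_sq_integral \<mu> y - hinge_sq_integral \<mu> x"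
proof (cases "\<mu>*y \<le> 1")
  case True
  then have x1: "\<mu>*x \<le> 1" using assms by (smt (verit) mult_left_mono)
  define X where "X = 1 - \<mu>*x"
  define Y where "Y = 1 - \<mu>*y"
  have Y0: "0 \<le> Y" using True unfolding Y_def by simp
  have XY: "Y \<le> X" using assms unfolding X_def Y_def by (simp add: mult_left_mono)
  have yx: "y - x = (X - Y)/\<mu>" using mu unfolding X_def Y_def by (simp add: field_simps)
  have "X^3 - Y^3 - 3*(Y^2*(X-Y)) = (X-Y)^2*(X+2*Y)"
    by (simp add: algebra_simps power2_eq_square power3_eq_cube)
  also have "\<dots> \<ge> 0" using Y0 XY by simp
  finally have key: "3*(Y^2*(X-Y)) \<le> X^3 - Y^3" by simp
  have "(hinge \<mu> y)^2 * (y - x) = (3*(Y^2*(X-Y)))/(3*\<mu>)"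
    unfolding hinge_def using Y0 yx by (simp add: Y_def)
  also have "\<dots> \<le> (X^3 - Y^3)/(3*\<mu>)" using divide_right_mono[OF key, of "3*\<mu>"] mu by simp
  also have "\<dots> = hinge_sq_integral \<mu> y - hinge_sq_integral \<mu> x"
    unfolding hinge_sq_integral_def X_def Y_def using True x1 mu by (simp add: field_simps)
  finally show ?thesis .
next
  case False
  then have hy: "hinge \<mu> y = 0" unfolding hinge_def by simp
  show ?thesis
  proof (cases "\<mu>*x \<le> 1")
    case True
    have "0 \<le> (1-\<mu>*x)^3/(3*\<mu>)" using True mu by simp
    also have "(1-\<mu>*x)^3/(3*\<mu>) = 1/(3*\<mu>) - (1 - (1-\<mu>*x)^3)/(3*\<mu>)" using mu by (simp add: field_simps)
    finally show ?thesis using False True hy unfolding hinge_sq_integral_def by simp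
  qed (use False hy in \<open>simp add: hinge_sq_integral_def\<close>)
qed

text \<open>The \<open>[2/2]\<close> Pade approximant of \<open>ln (1 + z)\<close> at \<open>z = 0\<close>, evaluated at \<open>z = 1/g\<close>.\<close>
definition ln_inv_pade :: "real \<Rightarrow> real" where
  "ln_inv_pade g = 3*(2*g+1)/(6*g^2+6*g+1)"

lemma ln_inv_pade_le_ln:
  assumes "0 < g" shows "ln_inv_pade g \<le> ln (1 + 1/g)"
proof -
  have D: "6*g^2+6*g+1 > 0" using assms by (simp add: add_pos_pos)
  have n: "3*(1/g)*(2+1/g) = 3*(2*g+1)/g^2" using assms by (simp add: field_simps power2_eq_square)
  have dd: "(1/g)^2+6*(1/g)+6 = (6*g^2+6*g+1)/g^2" using assms by (simp add: field_simps power2_eq_square)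
  have "ln_inv_pade g = 3*(1/g)*(2+1/g)/((1/g)^2+6*(1/g)+6)"
    unfolding ln_inv_pade_def n dd using assms D by simp
  also have "\<dots> \<le> ln (1 + 1/g)" using assms by (intro ln_add_one_ge_pade) simp
  finally show ?thesis .
qed

lemma ln_inv_pade_lower_bound:
  assumes "0 < g" shows "1/(g+1/2) + 1/(12*(g+1/2)^3) \<le> ln_inv_pade g"
proof -
  define w where "w = g + 1/2"
  have w: "w > 1/2" using assms unfolding w_def by simp
  have d: "12*w^2 - 1 > 0"
  proof -
    have "w*w > 1/2*(1/2)" using w by (intro mult_strict_mono) auto
    then show ?thesis by (simp add: power2_eq_square)
  qed
  have e: "ln_inv_pade g = 12*w/(12*w^2-1)"
  proof -
    have a: "12*w^2 - 1 = 2*(6*g^2+6*g+1)" unfolding w_def by (simp add: power2_eq_square algebra_simps)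
    have b: "12*w = 2*(3*(2*g+1))" unfolding w_def by (simp add: algebra_simps)
    show ?thesis unfolding a b ln_inv_pade_def by (simp only: mult_divide_mult_cancel_left_if) simp
  qed
  have "12*w/(12*w^2-1) - (1/w + 1/(12*w^3)) = 1/(12*w^3*(12*w^2-1))"
    using w d by (simp add: field_simps power2_eq_square power3_eq_cube)
  also have "\<dots> > 0" using w d by simp
  finally show ?thesis using e unfolding w_def by simp
qed

lemma ln_inv_pade_tradeoff_small_slope:
  assumes g: "0 < g" and mu: "0 < \<mu>" "\<mu> \<le> 1"
  shows "1 - \<mu>/2 + \<mu>^2/24 \<le> g*\<mu> + ln_inv_pade g/(4*\<mu>)"
proof -
  define w where "w = g + 1/2"
  define z where "z = \<mu>*w"
  have w: "w > 1/2" using g unfolding w_def by simp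
  have z: "z > 0" unfolding z_def using w mu by simp
  have "g*\<mu> + (1/w + 1/(12*w^3))/(4*\<mu>) \<le> g*\<mu> + ln_inv_pade g/(4*\<mu>)"
    using ln_inv_pade_lower_bound[OF g] mu unfolding w_def by (simp add: divide_right_mono)
  moreover have "g*\<mu> + (1/w + 1/(12*w^3))/(4*\<mu>) = z - \<mu>/2 + 1/(4*z) + \<mu>^2/(48*z^3)"
  proof -
    have gw: "g = w - 1/2" unfolding w_def by simp
    have "w \<noteq> 0" "\<mu> \<noteq> 0" using w mu by auto
    then show ?thesis unfolding z_def gw by (simp add: field_simps power2_eq_square power3_eq_cube)
  qed
  moreover have "1 - \<mu>/2 + \<mu>^2/24 \<le> z - \<mu>/2 + 1/(4*z) + \<mu>^2/(48*z^3)"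
  proof -
    have q: "z + 1/(4*z) - 1 = (2*z-1)^2/(4*z)" using z by (simp add: field_simps power2_eq_square)
    show ?thesis
    proof (cases "z \<le> 3/4")
      case True
      have "z^3 \<le> (3/4)^3" using True z by (intro power_mono) auto
      then have "z^3 \<le> 1/2" by (simp add: power3_eq_cube)
      then have "\<mu>^2*(2*z^3) \<le> \<mu>^2*1" by (intro mult_left_mono) auto
      then have "\<mu>^2/24 \<le> \<mu>^2/(48*z^3)" using z by (simp add: field_simps)
      moreover have "0 \<le> (2*z-1)^2/(4*z)" using z by simp
      ultimately show ?thesis using q by linarith
    next
      case False
      have "z/6 \<le> (2*z-1)^2"
      proof -
        have "(2*z-1)^2 - z/6 = (z - 3/4)*(4*z - 7/6) + 1/8" by (simp add: algebra_simps power2_eq_square)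
        moreover have "(z - 3/4)*(4*z - 7/6) \<ge> 0" using False by (intro mult_nonneg_nonneg) auto
        ultimately show ?thesis by simp
      qed
      then have "1/24 \<le> (2*z-1)^2/(4*z)" using z by (simp add: field_simps)
      moreover have "\<mu>^2 \<le> 1" using mu by (simp add: power_le_one)
      moreover have "0 \<le> \<mu>^2/(48*z^3)" using z by simp
      ultimately show ?thesis using q by (smt (verit) divide_right_mono)
    qed
  qed
  ultimately show ?thesis by linarith
qed

lemma ln_inv_pade_tradeoff_large_slope:
  assumes g: "0 < g" and mu: "1 \<le> \<mu>"
  shows "5/(8*\<mu>) \<le> g*\<mu> + ln_inv_pade g/(4*\<mu>)"
proof -
  have D: "6*g^2+6*g+1 > 0" using g by (simp add: add_pos_pos)
  have cub: "0 \<le> 48*g^3 + 18*g^2 - 10*g + 1"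
  proof -
    have "48*g^3 + 18*g^2 - 10*g + 1 = (g - 1/6)^2*(48*g+34) + 1/18"
      by (simp add: algebra_simps power2_eq_square power3_eq_cube)
    moreover have "(g - 1/6)^2*(48*g+34) \<ge> 0" using g by simp
    ultimately show ?thesis by simp
  qed
  have "5/2 \<le> 4*g + ln_inv_pade g"
  proof -
    have "4*g + ln_inv_pade g - 5/2 = (48*g^3 + 18*g^2 - 10*g + 1)/(2*(6*g^2+6*g+1))"
      unfolding ln_inv_pade_def using D by (simp add: field_simps power2_eq_square power3_eq_cube)
    also have "\<dots> \<ge> 0" using cub D by simp
    finally show ?thesis by simp
  qed
  also have "4*g \<le> 4*g*\<mu>^2" using g mu by (simp add: one_le_power)
  finally have "5/2 \<le> 4*g*\<mu>^2 + ln_inv_pade g" by simp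
  then have "5/2/(4*\<mu>) \<le> (4*g*\<mu>^2 + ln_inv_pade g)/(4*\<mu>)" using mu by (intro divide_right_mono) auto
  then show ?thesis using mu by (simp add: field_simps power2_eq_square)
qed

lemma sqrt_mult_le_add_quarter:
  fixes a b :: real assumes "0 \<le> a" "0 \<le> b" shows "sqrt (a*b) \<le> a + b/4"
proof -
  have "0 \<le> (sqrt a - sqrt b/2)^2" by simp
  then have "sqrt a * sqrt b \<le> a + b/4" using assms by (simp add: power2_eq_square algebra_simps)
  then show ?thesis by (simp add: real_sqrt_mult)
qed

lemma sqrt_tradeoff_large_slope:
  fixes u d Z :: real
  assumes u: "0 < u" "u \<le> 1" and d: "0 \<le> d" and Z: "Z \<le> 1" "Z \<le> u/2 + sqrt (d*u/3)"
  shows "Z \<le> 5*u/8 + d/(1+d)"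
proof (cases "d \<le> 1/2")
  case True
  have "sqrt (d*u/3) = sqrt ((d/(1+d)) * ((1+d)*u/3))" using d by (simp add: field_simps)
  also have "\<dots> \<le> d/(1+d) + (1+d)*u/3/4" using d u by (intro sqrt_mult_le_add_quarter) auto
  also have "(1+d)*u/3/4 \<le> u/8" using True u by (simp add: field_simps)
  finally show ?thesis using Z by simp
next
  case False
  show ?thesis
  proof (cases "1 \<le> 5*u/8 + d/(1+d)")
    case True then show ?thesis using Z by simp
  next
    case False2: False
    have e: "0 < 1+d" using d by simp
    have "1 - d/(1+d) = 1/(1+d)" using e by (simp add: field_simps)
    then have "5*u/8 < 1/(1+d)" using False2 by simp
    then have ue: "u*(1+d) \<le> 8/5" using e by (simp add: field_simps)
    have key: "u*(1+d)*(4*(1+d)-3) \<le> 12*d"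
    proof -
      have "u*(1+d)*(4*(1+d)-3) \<le> 8/5*(4*(1+d)-3)" using ue d by (intro mult_right_mono) auto
      also have "\<dots> \<le> 12*d" using False by simp
      finally show ?thesis .
    qed
    have "d*u/3 \<le> u*(d/(1+d))/4 + (d/(1+d))^2"
    proof -
      have "d*u/3 - (u*(d/(1+d))/4 + (d/(1+d))^2) = d*(u*(1+d)*(4*(1+d)-3) - 12*d)/(12*(1+d)^2)"
      proof -
        define e where "e = 1 + d"
        have de: "d = e - 1" unfolding e_def by simp
        have "e \<noteq> 0" using e unfolding e_def by simp
        then show ?thesis unfolding e_def[symmetric] de by (simp add: field_simps power2_eq_square)
      qed
      also have "\<dots> \<le> 0" using key d e by (intro divide_nonpos_pos mult_nonneg_nonpos) auto
      finally show ?thesis by simp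
    qed
    also have "\<dots> \<le> (u/8 + d/(1+d))^2"
    proof -
      have gen: "\<And>D::real. (u/8 + D)^2 = u*D/4 + D^2 + (u/8)^2" by (simp add: power2_eq_square algebra_simps)
      show ?thesis unfolding gen[of "d/(1+d)"] by simp
    qed
    finally have "sqrt (d*u/3) \<le> u/8 + d/(1+d)" using u d e by (intro real_le_lsqrt) auto
    then show ?thesis using Z by simp
  qed
qed


text \<open>In the following three lemmas \<open>H\<close> and \<open>H2\<close> stand for the first two \<open>p\<close>-moments of
  \<open>hinge \<mu> \<circ> W\<close>, \<open>Z\<close> for its \<open>q\<close>-mean and \<open>d\<close> for the \<open>\<chi>\<^sup>2\<close>-divergence of \<open>q\<close> from \<open>p\<close>.\<close>
lemma hinge_moment_bound_small_slope:
  fixes \<mu> d H H2 Z :: real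
  assumes mu: "0 < \<mu>" "\<mu> \<le> 1" and d: "0 \<le> d"
    and H0: "0 \<le> H" and H1: "H \<le> hinge_integral \<mu> 1" and H2: "H2 \<le> hinge_sq_integral \<mu> 1"
    and HH: "H^2 \<le> H2" and Z1: "Z \<le> 1" and Z2: "Z \<le> H + sqrt (d*(H2 - H^2))"
  shows "Z \<le> 1 - \<mu>/2 + \<mu>^2/24 + d/(1+d)"
proof (cases "1 \<le> d")
  case True
  then have "1/2 \<le> d/(1+d)" by (simp add: field_simps)
  moreover have "0 \<le> \<mu>^2/24" by simp
  ultimately show ?thesis using Z1 mu by linarith
next
  case False
  have I1: "hinge_integral \<mu> 1 = 1 - \<mu>/2" and I2: "hinge_sq_integral \<mu> 1 = 1 - \<mu> + \<mu>^2/3"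
    unfolding hinge_integral_def hinge_sq_integral_def using mu
    by (simp_all add: field_simps power2_eq_square power3_eq_cube)
  have var0: "0 \<le> H2 - H^2" using HH by simp
  have "sqrt (d*(H2-H^2)) = sqrt ((d/(1+d)) * ((1+d)*(H2-H^2)))" using d by (simp add: field_simps)
  also have "\<dots> \<le> d/(1+d) + (1+d)*(H2-H^2)/4" using d var0 by (intro sqrt_mult_le_add_quarter) auto
  also have "(1+d)*(H2-H^2)/4 \<le> (H2-H^2)/2"
    using mult_right_mono[of "1+d" 2 "H2-H^2"] False var0 by simp
  finally have "Z \<le> H + (H2-H^2)/2 + d/(1+d)" using Z2 by simp
  \<comment> \<open>\<open>H + (c - H\<^sup>2)/2\<close> is increasing for \<open>H \<le> 1\<close>, hence maximal at \<open>H = hinge_integral \<mu> 1\<close>.\<close>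
  also have "H + (H2-H^2)/2 \<le> H + (hinge_sq_integral \<mu> 1 - H^2)/2" using H2 by simp
  also have "\<dots> \<le> hinge_integral \<mu> 1 + (hinge_sq_integral \<mu> 1 - (hinge_integral \<mu> 1)^2)/2"
  proof -
    have "\<And>a b H::real. a + (b - a^2)/2 - (H + (b - H^2)/2) = (a - H)*(1 - (a+H)/2)"
      by (simp add: field_simps power2_eq_square)
    moreover have "0 \<le> (hinge_integral \<mu> 1 - H)*(1 - (hinge_integral \<mu> 1 + H)/2)"
      using H1 H0 I1 mu by (intro mult_nonneg_nonneg) auto
    ultimately show ?thesis by (metis diff_ge_0_iff_ge)
  qed
  also have "hinge_integral \<mu> 1 + (hinge_sq_integral \<mu> 1 - (hinge_integral \<mu> 1)^2)/2 = 1 - \<mu>/2 + \<mu>^2/24"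
    unfolding I1 I2 by (simp add: field_simps power2_eq_square)
  finally show ?thesis by simp
qed

lemma hinge_moment_bound_large_slope:
  fixes \<mu> d H H2 Z :: real
  assumes mu: "1 \<le> \<mu>" and d: "0 \<le> d"
    and H1: "H \<le> hinge_integral \<mu> 1" and H2: "H2 \<le> hinge_sq_integral \<mu> 1"
    and Z1: "Z \<le> 1" and Z2: "Z \<le> H + sqrt (d*(H2 - H^2))"
  shows "Z \<le> 5/(8*\<mu>) + d/(1+d)"
proof -
  define u where "u = 1/\<mu>"
  have u: "0 < u" "u \<le> 1" unfolding u_def using mu by auto
  have "H \<le> u/2" and "H2 \<le> u/3"
    using H1 H2 mu unfolding u_def hinge_integral_def hinge_sq_integral_def by (cases "\<mu> = 1"; simp)+
  moreover have "H2 - H^2 \<le> u/3" using \<open>H2 \<le> u/3\<close> zero_le_power2[of H] by linarith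
  then have "sqrt (d*(H2 - H^2)) \<le> sqrt (d*u/3)"
    using mult_left_mono[of "H2 - H^2" "u/3" d] d by simp
  ultimately have "Z \<le> u/2 + sqrt (d*u/3)" using Z2 by linarith
  then have "Z \<le> 5*u/8 + d/(1+d)" using sqrt_tradeoff_large_slope[OF u d Z1] by simp
  then show ?thesis unfolding u_def by simp
qed

lemma hinge_moment_bound:
  fixes g \<mu> d H H2 Z :: real
  assumes g: "0 < g" and mu: "0 < \<mu>" and d: "0 \<le> d"
    and H0: "0 \<le> H" and H1: "H \<le> hinge_integral \<mu> 1" and H2: "H2 \<le> hinge_sq_integral \<mu> 1"
    and HH: "H^2 \<le> H2" and Z1: "Z \<le> 1" and Z2: "Z \<le> H + sqrt (d*(H2 - H^2))"
  shows "Z \<le> g*\<mu> + ln (1+1/g)/(4*\<mu>) + d/(1+d)"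
proof -
  have "g*\<mu> + ln_inv_pade g/(4*\<mu>) \<le> g*\<mu> + ln (1+1/g)/(4*\<mu>)"
    using ln_inv_pade_le_ln[OF g] mu by (simp add: divide_right_mono)
  moreover have "Z \<le> g*\<mu> + ln_inv_pade g/(4*\<mu>) + d/(1+d)"
  proof (cases "\<mu> \<le> 1")
    case True
    then show ?thesis
      using hinge_moment_bound_small_slope[OF mu True d H0 H1 H2 HH Z1 Z2]
        ln_inv_pade_tradeoff_small_slope[OF g mu True] by simp
  next
    case False
    then have "1 \<le> \<mu>" by simp
    then show ?thesis
      using hinge_moment_bound_large_slope[OF _ d H1 H2 Z1 Z2]
        ln_inv_pade_tradeoff_large_slope[OF g] by fastforce
  qed
  ultimately show ?thesis by simp
qed

section \<open>The per-state bound\<close>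

lemma chi_square_eq:
  fixes q p :: "'a::finite \<Rightarrow> real"
  assumes p0: "\<And>a. 0 < p a" and p1: "sum p UNIV = 1" and q1: "sum q UNIV = 1"
  shows "(\<Sum>a\<in>UNIV. (q a - p a)^2 / p a) = (\<Sum>a\<in>UNIV. q a * q a / p a) - 1"
proof -
  have "(\<Sum>a\<in>UNIV. (q a - p a)^2 / p a) = (\<Sum>a\<in>UNIV. q a * q a / p a - 2 * q a + p a)"
  proof (rule sum.cong[OF refl])
    fix a
    have "p a \<noteq> 0" using p0[of a] by simp
    then show "(q a - p a)^2 / p a = q a * q a / p a - 2 * q a + p a"
      by (simp add: field_simps power2_eq_square)
  qed
  then show ?thesis using p1 q1 by (simp add: sum.distrib sum_subtractf sum_distrib_left[symmetric])
qed

lemma variance_eq_sum: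
  fixes p h :: "'a::finite \<Rightarrow> real"
  assumes p1: "sum p UNIV = 1"
  shows "(\<Sum>a\<in>UNIV. p a * (h a - (\<Sum>b\<in>UNIV. p b * h b))^2)
    = (\<Sum>a\<in>UNIV. p a * (h a)^2) - (\<Sum>a\<in>UNIV. p a * h a)^2"
proof -
  define H where "H = (\<Sum>a\<in>UNIV. p a * h a)"
  have "(\<Sum>a\<in>UNIV. p a * (h a - H)^2) = (\<Sum>a\<in>UNIV. p a * (h a)^2 - 2 * H * (p a * h a) + H^2 * p a)"
    by (rule sum.cong[OF refl]) (simp add: power2_eq_square algebra_simps)
  also have "\<dots> = (\<Sum>a\<in>UNIV. p a * (h a)^2) - 2 * H * H + H^2"
    using p1 unfolding H_def by (simp add: sum.distrib sum_subtractf sum_distrib_left[symmetric])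
  finally show ?thesis unfolding H_def by (simp add: power2_eq_square)
qed

text \<open>Cauchy--Schwarz in \<open>L\<^sup>2(p)\<close> applied to \<open>q/p - 1\<close> and \<open>h - E\<^sub>p h\<close>.\<close>
lemma change_of_measure_le:
  fixes q p h :: "'a::finite \<Rightarrow> real"
  assumes p0: "\<And>a. 0 < p a" and p1: "sum p UNIV = 1" and q1: "sum q UNIV = 1"
  shows "(\<Sum>a\<in>UNIV. q a * h a) \<le> (\<Sum>a\<in>UNIV. p a * h a)
    + sqrt (((\<Sum>a\<in>UNIV. q a * q a / p a) - 1)
            * ((\<Sum>a\<in>UNIV. p a * (h a)^2) - (\<Sum>a\<in>UNIV. p a * h a)^2))"
proof -
  define H where "H = (\<Sum>a\<in>UNIV. p a * h a)"
  define X where "X = (\<Sum>a\<in>UNIV. (q a - p a) * (h a - H))"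
  have X_eq: "X = (\<Sum>a\<in>UNIV. q a * h a) - H"
  proof -
    have "X = (\<Sum>a\<in>UNIV. q a * h a - p a * h a - H * q a + H * p a)"
      unfolding X_def by (intro sum.cong) (simp_all add: algebra_simps)
    also have "\<dots> = (\<Sum>a\<in>UNIV. q a * h a) - H - H * sum q UNIV + H * sum p UNIV"
      unfolding H_def by (simp add: sum.distrib sum_subtractf sum_distrib_left)
    finally show ?thesis using p1 q1 by simp
  qed
  have CS: "(\<Sum>a\<in>UNIV. ((q a - p a)/sqrt (p a)) * (sqrt (p a) * (h a - H)))^2
      \<le> (\<Sum>a\<in>UNIV. ((q a - p a)/sqrt (p a))^2) * (\<Sum>a\<in>UNIV. (sqrt (p a) * (h a - H))^2)"
    by (rule Cauchy_Schwarz_ineq_sum)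
  have e1: "(\<Sum>a\<in>UNIV. ((q a - p a)/sqrt (p a)) * (sqrt (p a) * (h a - H))) = X"
    unfolding X_def using p0 by (intro sum.cong) (auto dest: less_imp_neq[symmetric])
  have e2: "(\<Sum>a\<in>UNIV. ((q a - p a)/sqrt (p a))^2) = (\<Sum>a\<in>UNIV. q a * q a / p a) - 1"
    using p0 chi_square_eq[OF p0 p1 q1] by (simp add: power_divide less_imp_le)
  have e3: "(\<Sum>a\<in>UNIV. (sqrt (p a) * (h a - H))^2)
      = (\<Sum>a\<in>UNIV. p a * (h a)^2) - (\<Sum>a\<in>UNIV. p a * h a)^2"
    using p0 variance_eq_sum[OF p1, of h] unfolding H_def by (simp add: power_mult_distrib less_imp_le)
  have "X^2 \<le> ((\<Sum>a\<in>UNIV. q a * q a / p a) - 1)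
      * ((\<Sum>a\<in>UNIV. p a * (h a)^2) - (\<Sum>a\<in>UNIV. p a * h a)^2)"
    using CS unfolding e1 e2 e3 .
  then have "X \<le> sqrt (((\<Sum>a\<in>UNIV. q a * q a / p a) - 1)
      * ((\<Sum>a\<in>UNIV. p a * (h a)^2) - (\<Sum>a\<in>UNIV. p a * h a)^2))"
    by (rule real_le_rsqrt)
  then show ?thesis using X_eq unfolding H_def by linarith
qed

definition rank_cdf :: "('a::finite \<Rightarrow> real) \<Rightarrow> ('a \<Rightarrow> real) \<Rightarrow> 'a \<Rightarrow> real" where
  "rank_cdf k p a = (\<Sum>a'\<in>UNIV. if k a' \<le> k a then p a' else 0)"

lemma rank_cdf_eq_sum: "rank_cdf k p a = (\<Sum>a'\<in>{a'\<in>UNIV. k a' \<le> k a}. p a')"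
  unfolding rank_cdf_def by (simp add: sum.If_cases)

lemma rank_cdf_nonneg: "(\<And>a. 0 \<le> p a) \<Longrightarrow> 0 \<le> rank_cdf k p a"
  unfolding rank_cdf_def by (intro sum_nonneg) auto

lemma rank_cdf_le_one:
  assumes "\<And>a. 0 \<le> p a" and "sum p UNIV = 1" shows "rank_cdf k p a \<le> 1"
proof -
  have "rank_cdf k p a \<le> sum p UNIV" unfolding rank_cdf_def using assms(1) by (intro sum_mono) auto
  then show ?thesis using assms(2) by simp
qed

lemma hinge_expectation_ge:
  fixes q m W :: "'a::finite \<Rightarrow> real"
  assumes q0: "\<And>a. 0 \<le> q a" and q1: "sum q UNIV = 1" and m0: "\<And>a. 0 \<le> m a"
    and W0: "\<And>a. 0 \<le> W a" and mu: "0 \<le> \<mu>"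
  shows "1 - (\<Sum>a\<in>UNIV. max 0 (q a - m a)) - \<mu> * (\<Sum>a\<in>UNIV. m a * W a)
    \<le> (\<Sum>a\<in>UNIV. q a * hinge \<mu> (W a))"
proof -
  have "(\<Sum>a\<in>UNIV. min (q a) (m a)) = (\<Sum>a\<in>UNIV. q a - max 0 (q a - m a))"
    by (intro sum.cong) (auto simp: min_def max_def)
  then have "(\<Sum>a\<in>UNIV. min (q a) (m a)) = 1 - (\<Sum>a\<in>UNIV. max 0 (q a - m a))"
    using q1 by (simp add: sum_subtractf)
  moreover have "\<mu> * (\<Sum>a\<in>UNIV. min (q a) (m a) * W a) \<le> \<mu> * (\<Sum>a\<in>UNIV. m a * W a)"
    using W0 mu by (intro mult_left_mono sum_mono mult_right_mono) auto
  moreover have "(\<Sum>a\<in>UNIV. min (q a) (m a) * (1 - \<mu> * W a)) \<le> (\<Sum>a\<in>UNIV. q a * hinge \<mu> (W a))"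
  proof (rule sum_mono)
    fix a
    have "min (q a) (m a) * (1 - \<mu> * W a) \<le> min (q a) (m a) * hinge \<mu> (W a)"
      using q0[of a] m0[of a] unfolding hinge_def by (intro mult_left_mono) auto
    also have "\<dots> \<le> q a * hinge \<mu> (W a)" unfolding hinge_def by (intro mult_right_mono) auto
    finally show "min (q a) (m a) * (1 - \<mu> * W a) \<le> q a * hinge \<mu> (W a)" .
  qed
  moreover have "(\<Sum>a\<in>UNIV. min (q a) (m a) * (1 - \<mu> * W a))
      = (\<Sum>a\<in>UNIV. min (q a) (m a)) - \<mu> * (\<Sum>a\<in>UNIV. min (q a) (m a) * W a)"
    by (simp add: algebra_simps sum_subtractf sum_distrib_left)
  ultimately show ?thesis by linarith
qed

lemma state_coverage_bound:
  fixes q p m k :: "'a::finite \<Rightarrow> real" and \<gamma> :: real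
  assumes q0: "\<And>a. 0 \<le> q a" and q1: "sum q UNIV = 1" and p0: "\<And>a. 0 < p a" and p1: "sum p UNIV = 1"
    and m0: "\<And>a. 0 \<le> m a" and m1: "sum m UNIV = 1" and g: "0 < \<gamma>"
  shows "1 / (\<Sum>a\<in>UNIV. q a * q a / p a) \<le> (\<Sum>a\<in>UNIV. max 0 (q a - m a))
           + sqrt ((\<gamma> + (\<Sum>a\<in>UNIV. m a * rank_cdf k p a)) * ln ((1+\<gamma>)/\<gamma>))"
proof -
  define W where "W a = rank_cdf k p a" for a
  define L where "L = ln ((1+\<gamma>)/\<gamma>)"
  define Y where "Y = (\<gamma> + (\<Sum>a\<in>UNIV. m a * W a)) * L"
  define \<mu> where "\<mu> = L / (2 * sqrt Y)"
  define h where "h a = hinge \<mu> (W a)" for a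
  define H1 where "H1 = (\<Sum>a\<in>UNIV. p a * h a)"
  define H2 where "H2 = (\<Sum>a\<in>UNIV. p a * (h a)^2)"
  define C where "C = (\<Sum>a\<in>UNIV. q a * q a / p a)"
  define Z where "Z = (\<Sum>a\<in>UNIV. q a * h a)"
  have p0': "\<And>a. 0 \<le> p a" using p0 less_imp_le by blast
  have W0: "0 \<le> W a" for a unfolding W_def using p0' by (rule rank_cdf_nonneg)
  have "1 < (1+\<gamma>)/\<gamma>" using g by simp
  then have L: "0 < L" unfolding L_def by simp
  have "0 \<le> (\<Sum>a\<in>UNIV. m a * W a)" using m0 W0 by (simp add: sum_nonneg)
  then have Y: "0 < Y" unfolding Y_def using g L by simp
  have mu: "0 < \<mu>" unfolding \<mu>_def using L Y by simp
  have h0: "0 \<le> h a" and h1: "h a \<le> 1" for a unfolding h_def hinge_def using mu W0[of a] by auto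
  have "H1 \<le> hinge_integral \<mu> (sum p UNIV) - hinge_integral \<mu> 0"
    unfolding H1_def h_def W_def rank_cdf_eq_sum using p0' p1
    by (intro cdf_weighted_sum_le_primitive hinge_mult_le_hinge_integral_diff mu) auto
  then have H1_le: "H1 \<le> hinge_integral \<mu> 1" using p1 by (simp add: hinge_integral_def)
  have "H2 \<le> hinge_sq_integral \<mu> (sum p UNIV) - hinge_sq_integral \<mu> 0"
    unfolding H2_def h_def W_def rank_cdf_eq_sum using p0' p1
    by (intro cdf_weighted_sum_le_primitive[where f="\<lambda>x. (hinge \<mu> x)^2"]
        hinge_sq_mult_le_hinge_sq_integral_diff mu) auto
  then have H2_le: "H2 \<le> hinge_sq_integral \<mu> 1" using p1 by (simp add: hinge_sq_integral_def)
  have H1_nonneg: "0 \<le> H1" unfolding H1_def using p0' h0 by (simp add: sum_nonneg)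
  have "0 \<le> (\<Sum>a\<in>UNIV. p a * (h a - H1)^2)" using p0' by (simp add: sum_nonneg)
  then have H1_sq: "H1^2 \<le> H2" using variance_eq_sum[OF p1, of h] unfolding H1_def H2_def by simp
  have "0 \<le> (\<Sum>a\<in>UNIV. (q a - p a)^2 / p a)" using p0 by (intro sum_nonneg divide_nonneg_pos) auto
  then have d: "0 \<le> C - 1" using chi_square_eq[OF p0 p1 q1] unfolding C_def by simp
  have Z_le_one: "Z \<le> 1"
    using sum_mono[of UNIV "\<lambda>a. q a * h a" q] q0 h1 q1 unfolding Z_def by (simp add: mult_left_le)
  have "Z \<le> H1 + sqrt ((C - 1) * (H2 - H1^2))"
    using change_of_measure_le[OF p0 p1 q1, of h] unfolding Z_def H1_def H2_def C_def .
  then have "Z \<le> \<gamma>*\<mu> + ln (1+1/\<gamma>)/(4*\<mu>) + (C - 1)/(1 + (C - 1))"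
    using hinge_moment_bound[OF g mu d H1_nonneg H1_le H2_le H1_sq Z_le_one] by simp
  moreover have "1 - (\<Sum>a\<in>UNIV. max 0 (q a - m a)) - \<mu> * (\<Sum>a\<in>UNIV. m a * W a) \<le> Z"
    unfolding Z_def h_def using q0 q1 m0 W0 mu by (intro hinge_expectation_ge) auto
  moreover have "(C - 1)/(1 + (C - 1)) = 1 - 1/C" using d by (simp add: field_simps)
  moreover have "ln (1+1/\<gamma>) = L" unfolding L_def using g by (simp add: field_simps)
  ultimately have "1/C \<le> (\<Sum>a\<in>UNIV. max 0 (q a - m a)) + \<mu> * (\<gamma> + (\<Sum>a\<in>UNIV. m a * W a)) + L/(4*\<mu>)"
    by (simp add: algebra_simps)
  \<comment> \<open>The choice of \<open>\<mu>\<close> balances the last two terms, each of which equals \<open>sqrt Y / 2\<close>.\<close>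
  moreover have "\<mu> * (\<gamma> + (\<Sum>a\<in>UNIV. m a * W a)) = sqrt Y / 2"
  proof -
    have "\<mu> * (\<gamma> + (\<Sum>a\<in>UNIV. m a * W a)) = Y / (2 * sqrt Y)" unfolding \<mu>_def Y_def using L by simp
    also have "\<dots> = sqrt Y / 2" using Y by (simp add: field_simps real_sqrt_mult[symmetric])
    finally show ?thesis .
  qed
  moreover have "L/(4*\<mu>) = sqrt Y / 2" unfolding \<mu>_def using L Y by (simp add: field_simps)
  ultimately show ?thesis unfolding C_def Y_def W_def L_def by simp
qed

section \<open>The Gibbs policy\<close>

lemma is_policy_nonneg: "is_policy p \<Longrightarrow> 0 \<le> p s a"
  unfolding is_policy_def by simp

lemma is_policy_sum: "is_policy p \<Longrightarrow> sum (p s) UNIV = 1"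
  unfolding is_policy_def by simp

lemma is_policy_le_one: "is_policy p \<Longrightarrow> p s a \<le> 1"
  using member_le_sum[of a UNIV "p s"] unfolding is_policy_def by simp

lemma measurable_policyD: "measurable_policy M p \<Longrightarrow> (\<lambda>s. p s a) \<in> borel_measurable M"
  unfolding measurable_policy_def by simp

definition gibbs_normalizer :: "('s \<Rightarrow> 'a::finite \<Rightarrow> real) \<Rightarrow> ('s \<Rightarrow> 'a \<Rightarrow> real) \<Rightarrow> real \<Rightarrow> 's \<Rightarrow> real" where
  "gibbs_normalizer piref r \<beta> s = (\<Sum>b\<in>UNIV. piref s b * exp (r s b / \<beta>))"

lemma pistar_eq: "pistar piref r \<beta> s a = piref s a * exp (r s a / \<beta>) / gibbs_normalizer piref r \<beta> s"
  unfolding pistar_def gibbs_normalizer_def ..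

lemma gibbs_normalizer_pos: "(\<And>a. 0 < piref s a) \<Longrightarrow> 0 < gibbs_normalizer piref r \<beta> s"
  unfolding gibbs_normalizer_def by (intro sum_pos) auto

lemma pistar_pos: "(\<And>a. 0 < piref s a) \<Longrightarrow> 0 < pistar piref r \<beta> s a"
  unfolding pistar_eq using gibbs_normalizer_pos by (metis divide_pos_pos exp_gt_zero mult_pos_pos)

lemma sum_pistar: "(\<And>a. 0 < piref s a) \<Longrightarrow> sum (pistar piref r \<beta> s) UNIV = 1"
  unfolding pistar_eq using gibbs_normalizer_pos[of piref s r \<beta>]
  by (simp add: sum_divide_distrib[symmetric] gibbs_normalizer_def)

lemma measurable_policy_pistar:
  assumes "measurable_policy M piref" and "\<And>a. (\<lambda>s. r s a) \<in> borel_measurable M"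
  shows "measurable_policy M (pistar piref r \<beta>)"
proof -
  have [measurable]: "(\<lambda>s. piref s a) \<in> borel_measurable M" for a
    using assms(1) by (rule measurable_policyD)
  note [measurable] = assms(2)
  show ?thesis unfolding measurable_policy_def pistar_def by measurable
qed

lemma abs_ln_gibbs_normalizer_le:
  assumes pol: "is_policy piref" and full: "\<And>a. 0 < piref s a" and beta: "0 < \<beta>"
    and B: "\<And>a. \<bar>r s a\<bar> \<le> B"
  shows "\<bar>ln (gibbs_normalizer piref r \<beta> s)\<bar> \<le> B / \<beta>"
proof -
  have "- B / \<beta> \<le> r s b / \<beta>" and "r s b / \<beta> \<le> B / \<beta>" for b
    using B[of b] beta by (simp_all add: abs_le_iff field_simps)
  then have "piref s b * exp (- B / \<beta>) \<le> piref s b * exp (r s b / \<beta>)"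
    and "piref s b * exp (r s b / \<beta>) \<le> piref s b * exp (B / \<beta>)" for b
    using full[of b] by (auto intro!: mult_left_mono)
  then have "(\<Sum>b\<in>UNIV. piref s b) * exp (- B / \<beta>) \<le> gibbs_normalizer piref r \<beta> s"
    and "gibbs_normalizer piref r \<beta> s \<le> (\<Sum>b\<in>UNIV. piref s b) * exp (B / \<beta>)"
    unfolding gibbs_normalizer_def sum_distrib_right by (auto intro: sum_mono)
  moreover have "(\<Sum>b\<in>UNIV. piref s b) = 1" using pol by (rule is_policy_sum)
  ultimately have "exp (- B / \<beta>) \<le> gibbs_normalizer piref r \<beta> s"
    and "gibbs_normalizer piref r \<beta> s \<le> exp (B / \<beta>)" by simp_all
  moreover have Z: "0 < gibbs_normalizer piref r \<beta> s" using gibbs_normalizer_pos[of piref s] full by blast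
  ultimately show ?thesis
    using ln_le_cancel_iff[OF Z, of "exp (B / \<beta>)"] ln_le_cancel_iff[OF _ Z, of "exp (- B / \<beta>)"]
    by (simp add: abs_le_iff)
qed

lemma Jint_eq_ln_gibbs_normalizer_minus_KL:
  assumes full: "\<And>a. 0 < piref s a" and beta: "0 < \<beta>"
    and m0: "\<And>a. 0 \<le> m s a" and m1: "sum (m s) UNIV = 1"
  shows "Jint r piref \<beta> m s = \<beta> * ln (gibbs_normalizer piref r \<beta> s) - \<beta> * KL m (pistar piref r \<beta>) s"
proof -
  let ?Z = "gibbs_normalizer piref r \<beta> s" and ?q = "pistar piref r \<beta>"
  have Z: "0 < ?Z" using gibbs_normalizer_pos[of piref s] full by blast
  have "m s a * ln (m s a / piref s a) = m s a * ln (m s a / ?q s a) + m s a * r s a / \<beta> - m s a * ln ?Z"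
    for a
  proof (cases "m s a = 0")
    case False
    then have "0 < m s a" using m0[of a] by simp
    moreover have "0 < ?q s a" using pistar_pos[of piref s] full by blast
    ultimately have "ln (m s a / piref s a) = ln (m s a / ?q s a) + ln (?q s a / piref s a)"
      using full[of a] by (simp add: ln_div)
    also have "?q s a / piref s a = exp (r s a / \<beta>) / ?Z"
      unfolding pistar_eq using full[of a] by simp
    finally have "ln (m s a / piref s a) = ln (m s a / ?q s a) + (r s a / \<beta> - ln ?Z)"
      using Z by (simp add: ln_div)
    then have "m s a * ln (m s a / piref s a) = m s a * (ln (m s a / ?q s a) + (r s a / \<beta> - ln ?Z))"
      by simp
    then show ?thesis by (simp add: algebra_simps)
  qed simp
  then have "KL m piref s = KL m ?q s + (\<Sum>a\<in>UNIV. m s a * r s a) / \<beta> - ln ?Z"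
    unfolding KL_def using m1
    by (simp add: sum.distrib sum_subtractf sum_divide_distrib[symmetric] sum_distrib_right[symmetric])
  then have "\<beta> * KL m piref s = \<beta> * KL m ?q s + (\<Sum>a\<in>UNIV. m s a * r s a) - \<beta> * ln ?Z"
    using beta by (simp add: right_diff_distrib distrib_left)
  then show ?thesis unfolding Jint_def by simp
qed

lemma Jint_pistar:
  assumes "\<And>a. 0 < piref s a" and "0 < \<beta>"
  shows "Jint r piref \<beta> (pistar piref r \<beta>) s = \<beta> * ln (gibbs_normalizer piref r \<beta> s)"
proof -
  have q0: "0 < pistar piref r \<beta> s a" for a using pistar_pos[of piref s] assms(1) by blast
  have q1: "sum (pistar piref r \<beta> s) UNIV = 1" using sum_pistar[of piref s] assms(1) by blast
  have "KL (pistar piref r \<beta>) (pistar piref r \<beta>) s = 0"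
    unfolding KL_def using q0 by (simp add: less_imp_neq[symmetric])
  then show ?thesis
    using Jint_eq_ln_gibbs_normalizer_minus_KL[where piref=piref and s=s and m="pistar piref r \<beta>", OF assms] q0 q1
    by (simp add: less_imp_le)
qed

section \<open>Integration over states\<close>

lemma ennreal_integral_le_nn_integral:
  fixes f :: "'s \<Rightarrow> real"
  assumes f: "integrable M f"
  shows "ennreal (\<integral>x. f x \<partial>M) \<le> (\<integral>\<^sup>+x. ennreal (f x) \<partial>M)"
proof -
  have "(\<integral>x. f x \<partial>M) \<le> (\<integral>x. max 0 (f x) \<partial>M)"
    using f by (intro integral_mono) auto
  then have "ennreal (\<integral>x. f x \<partial>M) \<le> ennreal (\<integral>x. max 0 (f x) \<partial>M)" by (rule ennreal_leI)
  also have "ennreal (\<integral>x. max 0 (f x) \<partial>M) = (\<integral>\<^sup>+x. ennreal (max 0 (f x)) \<partial>M)"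
    using f by (intro nn_integral_eq_integral[symmetric]) auto
  also have "\<dots> = (\<integral>\<^sup>+x. ennreal (f x) \<partial>M)"
    by (intro nn_integral_cong) (simp add: max_def ennreal_neg)
  finally show ?thesis .
qed

lemma (in prob_space) expectation_le_sqrt_expectation_square:
  fixes f :: "'a \<Rightarrow> real"
  assumes "integrable M f" and "integrable M (\<lambda>x. (f x)^2)"
  shows "expectation f \<le> sqrt (expectation (\<lambda>x. (f x)^2))"
  using variance_eq[OF assms] variance_positive[of f] by (intro real_le_rsqrt) simp

text \<open>The tangent-line bound \<open>2 l - l\<^sup>2 / C \<le> C\<close> linearises \<open>1 / C\<close>, so that bounds on \<open>1 / C\<close>
  can be integrated over states.\<close>
lemma tangent_le_coverage_sum:
  fixes q p :: "'a::finite \<Rightarrow> real"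
  assumes q0: "\<And>a. 0 < q a" and p0: "\<And>a. 0 \<le> p a"
    and X: "(\<forall>a. 0 < p a) \<Longrightarrow> 1 / (\<Sum>a\<in>UNIV. q a * q a / p a) \<le> X"
  shows "ennreal (2*l - l^2 * X) \<le> (\<Sum>a\<in>UNIV. ennreal (q a) * (ennreal (q a) / ennreal (p a)))"
proof (cases "\<forall>a. 0 < p a")
  case False
  then obtain a where "\<not> 0 < p a" by auto
  then have a: "p a = 0" using p0[of a] by simp
  have "ennreal (q a) * (ennreal (q a) / ennreal (p a)) = top"
    using a q0[of a] by (simp add: ennreal_divide_zero ennreal_mult_top)
  then have "top \<le> (\<Sum>a\<in>UNIV. ennreal (q a) * (ennreal (q a) / ennreal (p a)))"
    by (metis (no_types, lifting) UNIV_I finite_class.finite_UNIV member_le_sum zero_le)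
  then show ?thesis by (rule order_trans[OF top_greatest])
next
  case True
  define C where "C = (\<Sum>a\<in>UNIV. q a * q a / p a)"
  have Cpos: "0 < C" unfolding C_def using q0 True
    by (intro sum_pos) (auto intro: divide_pos_pos mult_pos_pos)
  have eq: "(\<Sum>a\<in>UNIV. ennreal (q a) * (ennreal (q a) / ennreal (p a))) = ennreal C"
  proof -
    have "(\<Sum>a\<in>UNIV. ennreal (q a) * (ennreal (q a) / ennreal (p a))) = (\<Sum>a\<in>UNIV. ennreal (q a * q a / p a))"
      using q0 True by (intro sum.cong[OF refl]) (simp add: divide_ennreal ennreal_mult[symmetric] less_imp_le)
    also have "\<dots> = ennreal C" unfolding C_def using q0 True
      by (intro sum_ennreal) (auto intro: less_imp_le)
    finally show ?thesis .
  qed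
  have "1/C \<le> X" using X True unfolding C_def by simp
  then have "l^2 * (1/C) \<le> l^2 * X" by (intro mult_left_mono) auto
  then have "l^2/C \<le> l^2 * X" by simp
  moreover have "2*l - l^2/C \<le> C"
  proof -
    have "0 \<le> (C - l)^2/C" using Cpos by simp
    also have "(C - l)^2/C = C - 2*l + l^2/C" using Cpos by (simp add: field_simps power2_eq_square)
    finally show ?thesis by simp
  qed
  ultimately have "2*l - l^2 * X \<le> C" by simp
  then show ?thesis unfolding eq by (rule ennreal_leI)
qed

lemma Cov_ge_inverse:
  fixes M :: "'s measure" and q p :: "'s \<Rightarrow> 'a::finite \<Rightarrow> real" and X :: "'s \<Rightarrow> real"
  assumes M: "prob_space M" and q0: "\<And>s a. 0 < q s a" and p0: "\<And>s a. 0 \<le> p s a"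
    and X: "integrable M X" and XD: "(\<integral>s. X s \<partial>M) \<le> D"
    and state: "\<And>s. (\<forall>a. 0 < p s a) \<Longrightarrow> 1 / (\<Sum>a\<in>UNIV. q s a * q s a / p s a) \<le> X s"
  shows "ennreal (1 / D) \<le> Cov M q p"
proof (cases "0 < D")
  case True
  interpret prob_space M by (rule M)
  define l where "l = 1 / D"
  have "l = 2*l - l^2 * D" unfolding l_def using True by (simp add: field_simps power2_eq_square)
  also have "\<dots> \<le> 2*l - l^2 * (\<integral>s. X s \<partial>M)" using XD by (simp add: mult_left_mono)
  also have "\<dots> = (\<integral>s. 2*l - l^2 * X s \<partial>M)" using X by (simp add: prob_space)
  finally have "ennreal l \<le> ennreal (\<integral>s. 2*l - l^2 * X s \<partial>M)" by (rule ennreal_leI)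
  also have "\<dots> \<le> (\<integral>\<^sup>+ s. ennreal (2*l - l^2 * X s) \<partial>M)"
    using X by (intro ennreal_integral_le_nn_integral) simp
  also have "\<dots> \<le> Cov M q p" unfolding Cov_def
    using q0 p0 state by (intro nn_integral_mono tangent_le_coverage_sum) auto
  finally show ?thesis unfolding l_def .
next
  case False
  then have "1 / D \<le> 0" by simp
  then show ?thesis by (simp add: ennreal_neg)
qed

lemma J_pistar_minus_J_eq_integral_KL:
  fixes M :: "'s measure" and piref pb r :: "'s \<Rightarrow> 'a::finite \<Rightarrow> real"
  assumes M: "prob_space M"
    and ref_pol: "is_policy piref" and ref_meas: "measurable_policy M piref"
    and ref_full: "\<And>s a. 0 < piref s a" and beta: "0 < \<beta>"
    and B: "\<And>s a. \<bar>r s a\<bar> \<le> B" and r_meas: "\<And>a. (\<lambda>s. r s a) \<in> borel_measurable M"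
    and pb_pol: "is_policy pb" and pb_int: "integrable M (Jint r piref \<beta> pb)"
  shows "integrable M (KL pb (pistar piref r \<beta>))"
    and "J M r piref \<beta> (pistar piref r \<beta>) - J M r piref \<beta> pb
           = \<beta> * (\<integral>s. KL pb (pistar piref r \<beta>) s \<partial>M)"
proof -
  interpret prob_space M by (rule M)
  have [measurable]: "(\<lambda>s. piref s a) \<in> borel_measurable M" for a
    using ref_meas by (rule measurable_policyD)
  note [measurable] = r_meas
  let ?Z = "gibbs_normalizer piref r \<beta>" and ?q = "pistar piref r \<beta>"
  have "\<bar>ln (?Z s)\<bar> \<le> B / \<beta>" for s
    using abs_ln_gibbs_normalizer_le[of piref s \<beta> r B] ref_pol ref_full beta B by blast
  then have "\<beta> * \<bar>ln (?Z s)\<bar> \<le> B" for s using mult_left_mono[of _ "B / \<beta>" \<beta>] beta by simp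
  then have "integrable M (\<lambda>s. \<beta> * ln (?Z s))"
    by (intro integrable_const_bound[where B=B]) (use beta in \<open>auto simp: abs_mult gibbs_normalizer_def\<close>)
  moreover have Jq: "Jint r piref \<beta> ?q = (\<lambda>s. \<beta> * ln (?Z s))"
    using Jint_pistar[where piref=piref, OF ref_full beta] by auto
  ultimately have Jq_int: "integrable M (Jint r piref \<beta> ?q)" by simp
  have "KL pb ?q s = (Jint r piref \<beta> ?q s - Jint r piref \<beta> pb s) / \<beta>" for s
    using Jint_eq_ln_gibbs_normalizer_minus_KL[where piref=piref and m=pb, OF ref_full beta] pb_pol Jq beta
    by (auto simp: field_simps is_policy_nonneg is_policy_sum)
  then have KL_eq: "KL pb ?q = (\<lambda>s. (Jint r piref \<beta> ?q s - Jint r piref \<beta> pb s) / \<beta>)" by auto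
  show "integrable M (KL pb ?q)" unfolding KL_eq using Jq_int pb_int by simp
  show "J M r piref \<beta> ?q - J M r piref \<beta> pb = \<beta> * (\<integral>s. KL pb ?q s \<partial>M)"
    unfolding KL_eq J_def using Jq_int pb_int beta by simp
qed

lemma integral_tv_pistar_le_sqrt_J_gap:
  fixes M :: "'s measure" and piref pb r :: "'s \<Rightarrow> 'a::finite \<Rightarrow> real"
  assumes M: "prob_space M"
    and ref_pol: "is_policy piref" and ref_meas: "measurable_policy M piref"
    and ref_full: "\<And>s a. 0 < piref s a" and beta: "0 < \<beta>"
    and B: "\<And>s a. \<bar>r s a\<bar> \<le> B" and r_meas: "\<And>a. (\<lambda>s. r s a) \<in> borel_measurable M"
    and pb_pol: "is_policy pb" and pb_meas: "measurable_policy M pb"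
    and pb_int: "integrable M (Jint r piref \<beta> pb)"
  shows "integrable M (\<lambda>s. \<Sum>a\<in>UNIV. max 0 (pistar piref r \<beta> s a - pb s a))"
    and "(\<integral>s. (\<Sum>a\<in>UNIV. max 0 (pistar piref r \<beta> s a - pb s a)) \<partial>M)
           \<le> sqrt ((J M r piref \<beta> (pistar piref r \<beta>) - J M r piref \<beta> pb) / (2 * \<beta>))"
proof -
  interpret prob_space M by (rule M)
  let ?q = "pistar piref r \<beta>"
  define T where "T s = (\<Sum>a\<in>UNIV. max 0 (?q s a - pb s a))" for s
  have [measurable]: "(\<lambda>s. ?q s a) \<in> borel_measurable M" "(\<lambda>s. pb s a) \<in> borel_measurable M" for a
    using measurable_policy_pistar[OF ref_meas r_meas] pb_meas by (simp_all add: measurable_policyD)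
  have q0: "\<And>s a. 0 < ?q s a" and q1: "\<And>s. sum (?q s) UNIV = 1"
    using pistar_pos[of piref] sum_pistar[of piref] ref_full by blast+
  have pb0: "\<And>s a. 0 \<le> pb s a" and pb1: "\<And>s. sum (pb s) UNIV = 1"
    using pb_pol by (simp_all add: is_policy_nonneg is_policy_sum)
  have [measurable]: "T \<in> borel_measurable M" unfolding T_def by measurable
  have "0 \<le> T s" and "T s \<le> 1" for s
  proof -
    show "0 \<le> T s" unfolding T_def by (simp add: sum_nonneg)
    have "T s \<le> sum (?q s) UNIV" unfolding T_def using pb0 q0 by (intro sum_mono) (auto intro: less_imp_le)
    then show "T s \<le> 1" using q1 by simp
  qed
  then have T_int: "integrable M T" and T2_int: "integrable M (\<lambda>s. (T s)^2)"
    by (auto intro!: integrable_const_bound[where B=1] simp: T_def abs_le_iff power_le_one)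
  have pinsker: "2 * (T s)^2 \<le> KL pb ?q s" for s
    unfolding T_def KL_def using pb0 pb1 q0 q1 by (intro pinsker_inequality) auto
  show "integrable M (\<lambda>s. \<Sum>a\<in>UNIV. max 0 (?q s a - pb s a))" using T_int unfolding T_def .
  note KL = J_pistar_minus_J_eq_integral_KL[OF M ref_pol ref_meas ref_full beta B r_meas pb_pol pb_int]
  have "(\<integral>s. T s \<partial>M) \<le> sqrt (\<integral>s. (T s)^2 \<partial>M)"
    using expectation_le_sqrt_expectation_square[OF T_int T2_int] .
  also have "(\<integral>s. (T s)^2 \<partial>M) \<le> (\<integral>s. KL pb ?q s / 2 \<partial>M)"
    using T2_int KL(1) pinsker by (intro integral_mono) (auto simp: mult.commute)
  also have "(\<integral>s. KL pb ?q s / 2 \<partial>M) = (J M r piref \<beta> ?q - J M r piref \<beta> pb) / (2 * \<beta>)"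
    unfolding KL(2) using beta by simp
  finally show "(\<integral>s. (\<Sum>a\<in>UNIV. max 0 (?q s a - pb s a)) \<partial>M)
      \<le> sqrt ((J M r piref \<beta> ?q - J M r piref \<beta> pb) / (2 * \<beta>))" unfolding T_def by simp
qed

lemma integral_sqrt_rank_cdf_term_le:
  fixes M :: "'s measure" and \<pi> pb k :: "'s \<Rightarrow> 'a::finite \<Rightarrow> real"
  assumes M: "prob_space M"
    and pi_pol: "is_policy \<pi>" and pi_meas: "measurable_policy M \<pi>"
    and pb_pol: "is_policy pb" and pb_meas: "measurable_policy M pb"
    and k_meas: "\<And>a. (\<lambda>s. k s a) \<in> borel_measurable M" and g: "0 < \<gamma>"
    and Pr: "(\<integral>s. (\<Sum>a\<in>UNIV. pb s a * rank_cdf (k s) (\<pi> s) a) \<partial>M) \<le> 2 * Pr"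
  defines "A s \<equiv> sqrt ((\<gamma> + (\<Sum>a\<in>UNIV. pb s a * rank_cdf (k s) (\<pi> s) a)) * ln ((1 + \<gamma>) / \<gamma>))"
  shows "integrable M A" and "(\<integral>s. A s \<partial>M) \<le> sqrt ((\<gamma> + 2 * Pr) * ln ((1 + \<gamma>) / \<gamma>))"
proof -
  interpret prob_space M by (rule M)
  define Aw where "Aw s = (\<Sum>a\<in>UNIV. pb s a * rank_cdf (k s) (\<pi> s) a)" for s
  define L where "L = ln ((1 + \<gamma>) / \<gamma>)"
  have [measurable]: "(\<lambda>s. \<pi> s a) \<in> borel_measurable M" "(\<lambda>s. pb s a) \<in> borel_measurable M" for a
    using pi_meas pb_meas by (simp_all add: measurable_policyD)
  note [measurable] = k_meas
  have [measurable]: "Aw \<in> borel_measurable M" unfolding Aw_def rank_cdf_def by measurable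
  have "1 < (1+\<gamma>)/\<gamma>" using g by simp
  then have L: "0 < L" unfolding L_def by simp
  have Aw0: "0 \<le> Aw s" and Aw1: "Aw s \<le> 1" for s
  proof -
    show "0 \<le> Aw s" unfolding Aw_def using pb_pol pi_pol
      by (simp add: sum_nonneg rank_cdf_nonneg is_policy_nonneg)
    have "Aw s \<le> sum (pb s) UNIV" unfolding Aw_def using pb_pol pi_pol
      by (intro sum_mono mult_right_le_one_le rank_cdf_le_one rank_cdf_nonneg)
        (auto simp: is_policy_nonneg is_policy_sum)
    then show "Aw s \<le> 1" using pb_pol by (simp add: is_policy_sum)
  qed
  then have Aw_int: "integrable M Aw" by (intro integrable_const_bound[where B=1]) auto
  have A_eq: "A s = sqrt ((\<gamma> + Aw s) * L)" for s unfolding A_def Aw_def L_def ..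
  have [measurable]: "A \<in> borel_measurable M" unfolding A_eq by measurable
  have A_sq: "(A s)^2 = (\<gamma> + Aw s) * L" for s unfolding A_eq using Aw0[of s] g L by simp
  have "\<bar>A s\<bar> \<le> sqrt ((\<gamma> + 1) * L)" for s
    unfolding A_eq using Aw0[of s] Aw1[of s] g L by (simp add: mult_right_mono)
  then show A_int: "integrable M A"
    by (intro integrable_const_bound[where B="sqrt ((\<gamma> + 1) * L)"]) auto
  have "(\<integral>s. A s \<partial>M) \<le> sqrt (\<integral>s. (A s)^2 \<partial>M)"
    using expectation_le_sqrt_expectation_square[OF A_int] Aw_int unfolding A_sq by simp
  also have "(\<integral>s. (A s)^2 \<partial>M) = (\<gamma> + (\<integral>s. Aw s \<partial>M)) * L"
    unfolding A_sq using Aw_int by (simp add: prob_space algebra_simps)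
  also have "\<dots> \<le> (\<gamma> + 2 * Pr) * L" using Pr L unfolding Aw_def by (intro mult_right_mono) auto
  finally show "(\<integral>s. A s \<partial>M) \<le> sqrt ((\<gamma> + 2 * Pr) * ln ((1 + \<gamma>) / \<gamma>))"
    unfolding L_def by simp
qed

lemma Cov_pistar_ge:
  fixes M :: "'s measure" and piref \<pi> pb r k :: "'s \<Rightarrow> 'a::finite \<Rightarrow> real"
  assumes M: "prob_space M"
    and ref_pol: "is_policy piref" and ref_meas: "measurable_policy M piref"
    and ref_full: "\<And>s a. 0 < piref s a" and beta: "0 < \<beta>"
    and r_bdd: "\<exists>B. \<forall>s a. \<bar>r s a\<bar> \<le> B" and r_meas: "\<And>a. (\<lambda>s. r s a) \<in> borel_measurable M"
    and pi_pol: "is_policy \<pi>" and pi_meas: "measurable_policy M \<pi>"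
    and pb_pol: "is_policy pb" and pb_meas: "measurable_policy M pb"
    and pb_int: "integrable M (Jint r piref \<beta> pb)"
    and g: "0 < \<gamma>" and k_meas: "\<And>a. (\<lambda>s. k s a) \<in> borel_measurable M"
    and Pr: "(\<integral>s. (\<Sum>a\<in>UNIV. pb s a * rank_cdf (k s) (\<pi> s) a) \<partial>M) \<le> 2 * Pr"
  shows "Cov M (pistar piref r \<beta>) \<pi> \<ge> ennreal (1 / (sqrt ((\<gamma> + 2 * Pr) * ln ((1 + \<gamma>) / \<gamma>))
              + sqrt ((J M r piref \<beta> (pistar piref r \<beta>) - J M r piref \<beta> pb) / (2 * \<beta>))))"
proof -
  obtain B where B: "\<And>s a. \<bar>r s a\<bar> \<le> B" using r_bdd by auto
  let ?q = "pistar piref r \<beta>"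
  define T where "T s = (\<Sum>a\<in>UNIV. max 0 (?q s a - pb s a))" for s
  define A where "A s = sqrt ((\<gamma> + (\<Sum>a\<in>UNIV. pb s a * rank_cdf (k s) (\<pi> s) a)) * ln ((1 + \<gamma>) / \<gamma>))"
    for s
  note T = integral_tv_pistar_le_sqrt_J_gap[OF M ref_pol ref_meas ref_full beta B r_meas pb_pol pb_meas pb_int]
  note A = integral_sqrt_rank_cdf_term_le[OF M pi_pol pi_meas pb_pol pb_meas k_meas g Pr]
  have q0: "\<And>s a. 0 < ?q s a" using pistar_pos[of piref] ref_full by blast
  have "1 / (\<Sum>a\<in>UNIV. ?q s a * ?q s a / \<pi> s a) \<le> T s + A s" if "\<forall>a. 0 < \<pi> s a" for s
    unfolding T_def A_def using state_coverage_bound[of "?q s" "\<pi> s" "pb s" \<gamma> "k s"] that g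
      q0 sum_pistar[of piref s] ref_full pi_pol pb_pol
    by (simp add: less_imp_le add.commute is_policy_sum is_policy_nonneg)
  moreover have "integrable M (\<lambda>s. T s + A s)" using T(1) A(1) unfolding T_def A_def by simp
  moreover have "(\<integral>s. T s + A s \<partial>M) \<le> sqrt ((\<gamma> + 2 * Pr) * ln ((1 + \<gamma>) / \<gamma>))
      + sqrt ((J M r piref \<beta> ?q - J M r piref \<beta> pb) / (2 * \<beta>))"
    using T A unfolding T_def A_def by simp
  ultimately show ?thesis using pi_pol
    by (intro Cov_ge_inverse[OF M q0]) (auto simp: is_policy_nonneg)
qed

lemma sum_rank_cdf_le_twice_pref:
  fixes m p k :: "'a::finite \<Rightarrow> real" and Q :: "'a \<Rightarrow> 'a \<Rightarrow> real"
  assumes m0: "\<And>a. 0 \<le> m a" and p0: "\<And>a. 0 \<le> p a" and Q0: "\<And>a a'. 0 \<le> Q a a'"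
    and Q_half: "\<And>a a'. k a' \<le> k a \<Longrightarrow> 1/2 \<le> Q a a'"
  shows "(\<Sum>a\<in>UNIV. m a * rank_cdf k p a) \<le> 2 * (\<Sum>a\<in>UNIV. \<Sum>a'\<in>UNIV. m a * p a' * Q a a')"
  unfolding rank_cdf_def sum_distrib_left
proof (intro sum_mono)
  fix a a'
  have mp: "0 \<le> m a * p a'" using m0 p0 by simp
  then have "0 \<le> m a * p a' * Q a a'" using Q0 by simp
  then show "m a * (if k a' \<le> k a then p a' else 0) \<le> 2 * (m a * p a' * Q a a')"
    using Q_half[of a' a] mult_left_mono[OF _ mp, of 1 "2 * Q a a'"] by (auto simp: algebra_simps)
qed

lemma integral_rank_cdf_le_Pref:
  fixes M :: "'s measure" and \<pi> pb k :: "'s \<Rightarrow> 'a::finite \<Rightarrow> real" and P :: "'s \<Rightarrow> 'a \<Rightarrow> 'a \<Rightarrow> real"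
  assumes M: "prob_space M"
    and pi_pol: "is_policy \<pi>" and pi_meas: "measurable_policy M \<pi>"
    and pb_pol: "is_policy pb" and pb_meas: "measurable_policy M pb"
    and P_range: "\<And>s a a'. 0 \<le> P s a a' \<and> P s a a' \<le> 1"
    and P_meas: "\<And>a a'. (\<lambda>s. P s a a') \<in> borel_measurable M"
    and k_meas: "\<And>a. (\<lambda>s. k s a) \<in> borel_measurable M"
    and P_half: "\<And>s a a'. k s a' \<le> k s a \<Longrightarrow> 1/2 \<le> P s a a'"
  shows "(\<integral>s. (\<Sum>a\<in>UNIV. pb s a * rank_cdf (k s) (\<pi> s) a) \<partial>M) \<le> 2 * Pref M P pb \<pi>"
proof -
  interpret prob_space M by (rule M)
  have [measurable]: "(\<lambda>s. \<pi> s a) \<in> borel_measurable M" "(\<lambda>s. pb s a) \<in> borel_measurable M" for a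
    using pi_meas pb_meas by (simp_all add: measurable_policyD)
  note [measurable] = k_meas P_meas
  have pi0: "\<And>s a. 0 \<le> \<pi> s a" and pi1: "\<And>s. sum (\<pi> s) UNIV = 1"
    and pb0: "\<And>s a. 0 \<le> pb s a" and le1: "\<And>s a. pb s a \<le> 1" "\<And>s a. \<pi> s a \<le> 1"
    using pi_pol pb_pol by (simp_all add: is_policy_nonneg is_policy_sum is_policy_le_one)
  have [measurable]: "(\<lambda>s. rank_cdf (k s) (\<pi> s) a) \<in> borel_measurable M" for a
    unfolding rank_cdf_def by measurable
  have "0 \<le> rank_cdf (k s) (\<pi> s) a" "rank_cdf (k s) (\<pi> s) a \<le> 1" for s a
    using pi0 pi1 by (simp_all add: rank_cdf_nonneg rank_cdf_le_one)
  then have "integrable M (\<lambda>s. pb s a * rank_cdf (k s) (\<pi> s) a)" for a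
    using pb0 le1 by (intro integrable_const_bound[where B=1]) (auto simp: abs_mult mult_le_one)
  moreover have "integrable M (\<lambda>s. pb s a * \<pi> s a' * P s a a')" for a a'
    using pb0 pi0 le1 P_range
    by (intro integrable_const_bound[where B=1]) (auto simp: abs_mult mult_le_one)
  ultimately show ?thesis
    unfolding Pref_def using pb0 pi0 P_range P_half
    by (subst integral_mult_right_zero[symmetric], intro integral_mono sum_rank_cdf_le_twice_pref) auto
qed

lemma Pref_swap: "Pref M P p p' = Pref M (\<lambda>s a a'. P s a' a) p' p"
  unfolding Pref_def by (subst sum.swap) (simp add: ac_simps)

theorem lemmaG3:
  fixes M :: "'s measure"
    and piref \<pi> :: "'s \<Rightarrow> 'a::finite \<Rightarrow> real"
    and r :: "'s \<Rightarrow> 'a \<Rightarrow> real"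
    and P :: "'s \<Rightarrow> 'a \<Rightarrow> 'a \<Rightarrow> real"
    and \<beta> :: real
  assumes M: "prob_space M"
    and ref_pol: "is_policy piref" and ref_meas: "measurable_policy M piref"
    and ref_full: "\<And>s a. 0 < piref s a"
    and beta: "0 < \<beta>"
    and r_bdd: "\<exists>B. \<forall>s a. \<bar>r s a\<bar> \<le> B"
    and r_meas: "\<And>a. (\<lambda>s. r s a) \<in> borel_measurable M"
    and P_range: "\<And>s a a'. 0 \<le> P s a a' \<and> P s a a' \<le> 1"
    and P_meas: "\<And>a a'. (\<lambda>s. P s a a') \<in> borel_measurable M"
    and P_half: "\<And>s a a'. r s a \<ge> r s a' \<Longrightarrow> P s a a' \<ge> 1/2"
    and pi_pol: "is_policy \<pi>" and pi_meas: "measurable_policy M \<pi>"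
  shows "\<forall>\<gamma>::real. \<forall>pb :: 's \<Rightarrow> 'a \<Rightarrow> real.
           0 < \<gamma> \<and> is_policy pb \<and> measurable_policy M pb \<and> integrable M (Jint r piref \<beta> pb) \<longrightarrow>
           Cov M (pistar piref r \<beta>) \<pi> \<ge>
             ennreal (1 / (sqrt ((\<gamma> + 2 * Pref M P pb \<pi>) * ln ((1 + \<gamma>) / \<gamma>))
                   + sqrt ((J M r piref \<beta> (pistar piref r \<beta>) - J M r piref \<beta> pb) / (2 * \<beta>))))
           \<and> Cov M (pistar piref r \<beta>) \<pi> \<ge>
             ennreal (1 / (sqrt ((\<gamma> + 2 * Pref M P \<pi> pb) * ln ((1 + \<gamma>) / \<gamma>))
                   + sqrt ((J M r piref \<beta> (pistar piref r \<beta>) - J M r piref \<beta> pb) / (2 * \<beta>))))"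
proof (intro allI impI)
  fix \<gamma> :: real and pb :: "'s \<Rightarrow> 'a \<Rightarrow> real"
  assume "0 < \<gamma> \<and> is_policy pb \<and> measurable_policy M pb \<and> integrable M (Jint r piref \<beta> pb)"
  then have g: "0 < \<gamma>" and pb_pol: "is_policy pb" and pb_meas: "measurable_policy M pb"
    and pb_int: "integrable M (Jint r piref \<beta> pb)" by auto
  note bound = Cov_pistar_ge[OF M ref_pol ref_meas ref_full beta r_bdd r_meas pi_pol pi_meas
      pb_pol pb_meas pb_int g]
  have "(\<integral>s. (\<Sum>a\<in>UNIV. pb s a * rank_cdf (r s) (\<pi> s) a) \<partial>M) \<le> 2 * Pref M P pb \<pi>"
    using P_half by (intro integral_rank_cdf_le_Pref[OF M pi_pol pi_meas pb_pol pb_meas P_range P_meas r_meas])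
  \<comment> \<open>Ranking by \<open>-r\<close> instead of \<open>r\<close> exchanges the roles of the two policies in the preference.\<close>
  moreover have "(\<integral>s. (\<Sum>a\<in>UNIV. pb s a * rank_cdf (\<lambda>a. - r s a) (\<pi> s) a) \<partial>M) \<le> 2 * Pref M P \<pi> pb"
    unfolding Pref_swap[of M P \<pi>] using P_range P_meas P_half r_meas
    by (intro integral_rank_cdf_le_Pref[OF M pi_pol pi_meas pb_pol pb_meas]) auto
  ultimately show "Cov M (pistar piref r \<beta>) \<pi> \<ge>
             ennreal (1 / (sqrt ((\<gamma> + 2 * Pref M P pb \<pi>) * ln ((1 + \<gamma>) / \<gamma>))
                   + sqrt ((J M r piref \<beta> (pistar piref r \<beta>) - J M r piref \<beta> pb) / (2 * \<beta>))))
           \<and> Cov M (pistar piref r \<beta>) \<pi> \<ge>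
             ennreal (1 / (sqrt ((\<gamma> + 2 * Pref M P \<pi> pb) * ln ((1 + \<gamma>) / \<gamma>))
                   + sqrt ((J M r piref \<beta> (pistar piref r \<beta>) - J M r piref \<beta> pb) / (2 * \<beta>))))"
    using bound[of r] bound[of "\<lambda>s a. - r s a"] r_meas by auto
qed

end
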